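(* Let $M>0$, $m\in\mathbb{R}$ and let $n\ge2$ be an integer. Let $\mathcal{H}$ be the set of functions $h:\mathbb{R}\to[0,\infty)$ such that: (i) the support of $h$ (closure of $\{h>0\}$) is an interval $[0,b]$ for some $b>0$; (ii) $h$ is continuous and concave on $[0,b]$; (iii) $h(0)=1$ and the right derivative of $h$ at $0$ is $\le m$; (iv) with $f:=h^{n-1}$, $\int_0^b t f(t)\,dt=M$. Then $\mathcal{H}\neq\emptyset$ if and only if $m\ge -1/\sqrt{Mn(n+1)}$. In that case, setting $\mu(h):=\int_0^b f(t)\,dt$ for $h\in\mathcal{H}$: the minimum of $\mu$ over $\mathcal{H}$ is attained, and it is attained exactly at those $h$ which are affine on their support $[0,b]$ with $h(b)=0$; the maximum of $\mu$ over $\mathcal{H}$ is attained, and it is attained exactly at those $h$ with $h(t)=1+mt$ for all $t$ in the support of $h$. *)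

theory Defs
  imports "HOL-Analysis.Analysis"
begin

definition supp_pos :: "(real \<Rightarrow> real) \<Rightarrow> real set" where
  "supp_pos h = closure {t. h t > 0}"

definition H_class :: "real \<Rightarrow> real \<Rightarrow> nat \<Rightarrow> (real \<Rightarrow> real) set" where
  "H_class M m n = {h. (\<forall>t. h t \<ge> 0) \<and>
     (\<exists>b>0. supp_pos h = {0..b}
        \<and> continuous_on {0..b} h \<and> concave_on {0..b} h
        \<and> h 0 = 1
        \<and> (\<exists>d. (h has_real_derivative d) (at 0 within {0..b}) \<and> d \<le> m)
        \<and> integral {0..b} (\<lambda>t. t * h t ^ (n - 1)) = M)}"

definition mu :: "nat \<Rightarrow> (real \<Rightarrow> real) \<Rightarrow> real" where
  "mu n h = integral (supp_pos h) (\<lambda>t. h t ^ (n - 1))"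

end

theory Submission
  imports Defs
begin

text \<open>Every member \<open>h\<close> of the class is concave with \<open>h 0 = 1\<close>, hence lies below its tangent
  \<open>1 + m t\<close>, and all densities \<open>f = h\<^sup>n\<^sup>-\<^sup>1\<close> have first moment \<open>M\<close>. If two such densities
  \<open>f\<^sub>1, f\<^sub>2\<close> cross once, at \<open>c\<close>, with \<open>f\<^sub>2 \<le> f\<^sub>1\<close> before \<open>c\<close>, then integrating
  \<open>(f\<^sub>1 - f\<^sub>2) (1 - t/c) \<ge> 0\<close> gives \<open>\<mu> f\<^sub>2 \<le> \<mu> f\<^sub>1\<close>, with equality only if they agree. The truncated
  line \<open>1 + m t\<close> dominates every member up to the end of its own support, so it maximises \<open>\<mu>\<close>; a
  concave member crosses the tent \<open>1 - t/B\<close> at most once, from above, so the tent minimises \<open>\<mu>\<close>.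
  The moment condition fixes \<open>B = sqrt (M n (n + 1))\<close>, and the tent is admissible exactly when
  \<open>m \<ge> -1/B\<close>; for smaller \<open>m\<close> every candidate lies below a narrower tent, whose first moment is
  less than \<open>M\<close>.\<close>

section \<open>Concave functions at the left end point\<close>

lemma concave_on_chord_from_left_end:
  fixes g :: "real \<Rightarrow> real"
  assumes "concave_on {a..b} g" "a \<le> s" "s \<le> t" "t \<le> b" "a < t"
  shows "g a + (g t - g a) / (t - a) * (s - a) \<le> g s"
proof -
  have "concave_on {a..t} g"
    using assms unfolding concave_on_def by (elim convex_on_subset) auto
  from concave_onD_Icc'[OF this, of s] show ?thesis
    using assms by simp
qed

lemma concave_on_le_tangent_at_left_end:
  fixes g :: "real \<Rightarrow> real"
  assumes conc: "concave_on {a..b} g" and "a < b"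
    and der: "(g has_real_derivative d) (at a within {a..b})" and t: "t \<in> {a..b}"
  shows "g t \<le> g a + d * (t - a)"
proof (cases "t = a")
  case False
  with t have "a < t" by simp
  have "((\<lambda>s. (g s - g a) / (s - a)) \<longlongrightarrow> d) (at_right a)"
    using der \<open>a < b\<close> by (simp add: has_field_derivative_iff at_within_Icc_at_right)
  moreover have "\<forall>\<^sub>F s in at_right a. (g t - g a) / (t - a) \<le> (g s - g a) / (s - a)"
    using eventually_at_right_real[OF \<open>a < t\<close>]
  proof eventually_elim
    fix s assume s: "s \<in> {a<..<t}"
    then have "0 < s - a"
      by simp
    moreover have "(g t - g a) / (t - a) * (s - a) \<le> g s - g a"
      using concave_on_chord_from_left_end[OF conc, of s t] t s by simp
    ultimately show "(g t - g a) / (t - a) \<le> (g s - g a) / (s - a)"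
      by (rule mult_imp_le_div_pos)
  qed
  ultimately have "(g t - g a) / (t - a) \<le> d"
    by (rule tendsto_lowerbound) simp
  with \<open>a < t\<close> show ?thesis
    by (simp add: field_simps)
qed simp

lemma concave_on_stays_below_line:
  fixes g :: "real \<Rightarrow> real"
  assumes conc: "concave_on {a..b} g" and "a < s" "s \<le> t" "t \<le> b"
    and below: "g s < g a + c * (s - a)"
  shows "g t < g a + c * (t - a)"
proof (rule ccontr)
  assume "\<not> ?thesis"
  then have "c * (s - a) \<le> (g t - g a) / (t - a) * (s - a)"
    using assms by (intro mult_right_mono) (auto simp: field_simps)
  with concave_on_chord_from_left_end[OF conc, of s t] assms show False
    by linarith
qed

text \<open>Members of the class and their powers are profiles. Since \<open>h b > 0\<close> is allowed, a profile
  may jump at the end \<open>b\<close> of its support.\<close>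
definition profile :: "real \<Rightarrow> (real \<Rightarrow> real) \<Rightarrow> bool" where
  "profile b h \<longleftrightarrow> 0 < b \<and> continuous_on {0..b} h \<and> (\<forall>t. 0 \<le> h t)
     \<and> (\<forall>t\<in>{0..<b}. 0 < h t) \<and> (\<forall>t. t \<notin> {0..b} \<longrightarrow> h t = 0)"

lemma profileD:
  assumes "profile b h"
  shows "0 < b" and "continuous_on {0..b} h" and "0 \<le> h t"
    and "0 \<le> t \<Longrightarrow> t < b \<Longrightarrow> 0 < h t" and "t < 0 \<or> b < t \<Longrightarrow> h t = 0"
  using assms by (auto simp: profile_def)

lemma profile_power:
  assumes "profile b h" "0 < p"
  shows "profile b (\<lambda>t. h t ^ p)"
proof -
  have "continuous_on {0..b} (\<lambda>t. h t ^ p)"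
    using assms(1) unfolding profile_def by (intro continuous_intros) simp
  with assms show ?thesis
    by (simp add: profile_def)
qed

lemma supp_pos_profile: "profile b h \<Longrightarrow> supp_pos h = {0..b}"
proof -
  assume h: "profile b h"
  have "{0..<b} \<subseteq> {t. 0 < h t}"
    using profileD(4)[OF h] by auto
  then have "closure {0..<b} \<subseteq> supp_pos h"
    unfolding supp_pos_def by (rule closure_mono)
  then have "{0..b} \<subseteq> supp_pos h"
    using profileD(1)[OF h] by simp
  moreover have "supp_pos h \<subseteq> {0..b}"
    unfolding supp_pos_def
  proof (rule closure_minimal)
    show "{t. 0 < h t} \<subseteq> {0..b}"
    proof
      fix t assume "t \<in> {t. 0 < h t}"
      then show "t \<in> {0..b}"
        using profileD(5)[OF h, of t] by (cases "t < 0 \<or> b < t") auto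
    qed
  qed simp
  ultimately show ?thesis
    by blast
qed

lemma nonneg_has_integral_0_imp_eq_0:
  fixes w :: "real \<Rightarrow> real"
  assumes int0: "(w has_integral 0) UNIV" and nonneg: "\<And>t. 0 \<le> w t"
    and cont: "continuous_on {\<alpha>..\<beta>} w" and "\<alpha> < \<beta>" and t: "t \<in> {\<alpha>..\<beta>}"
  shows "w t = 0"
proof -
  have "integral {\<alpha>..\<beta>} w \<le> integral UNIV w"
    using int0 cont nonneg
    by (intro integral_subset_le) (auto simp: integrable_continuous_real has_integral_integrable)
  also have "\<dots> = 0"
    using int0 by (rule integral_unique)
  finally have "integral {\<alpha>..\<beta>} w = 0"
    using integral_nonneg[OF integrable_continuous_real[OF cont]] nonneg by simp
  with integral_eq_0_iff[OF cont \<open>\<alpha> < \<beta>\<close>] nonneg t show ?thesis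
    by blast
qed

lemma continuous_on_vanishing_off_point:
  fixes f :: "real \<Rightarrow> real"
  assumes cont: "continuous_on {a..b} f" and "a < b"
    and off: "\<And>s. s \<in> {a..b} \<Longrightarrow> s \<noteq> c \<Longrightarrow> f s = 0" and t: "t \<in> {a..b}"
  shows "f t = 0"
proof -
  let ?Z = "{s \<in> {a..b}. f s = 0}"
  have "t islimpt {a..b}"
    using \<open>a < b\<close> t by simp
  then have "t islimpt insert c ({a..b} - {c})"
    by (rule islimpt_subset) blast
  then have "t islimpt ({a..b} - {c})"
    by (simp only: islimpt_insert)
  moreover have "{a..b} - {c} \<subseteq> ?Z"
    using off by blast
  ultimately have "t islimpt ?Z"
    by (rule islimpt_subset)
  moreover have "closed ?Z"
    by (rule continuous_closed_preimage_constant[OF cont]) simp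
  ultimately show ?thesis
    using closed_limpt by blast
qed

text \<open>The nonnegative integrand vanishes wherever it is continuous. Beyond the support of \<open>u\<close> it is
  \<open>- v k\<close> with \<open>v > 0\<close>, so \<open>k\<close> would vanish on an interval.\<close>
lemma profile_support_le_if_weighted_integral_0:
  assumes u: "profile a u" and v: "profile b v"
    and k: "continuous_on UNIV k" "\<And>t. k t = 0 \<Longrightarrow> t = c"
    and nonneg: "\<And>t. 0 \<le> (u t - v t) * k t"
    and int0: "((\<lambda>t. (u t - v t) * k t) has_integral 0) UNIV"
  shows "b \<le> a"
proof (rule ccontr)
  assume "\<not> b \<le> a"
  define \<alpha> where "\<alpha> = (a + b) / 2"
  have "0 < a" "a < \<alpha>" "\<alpha> < b"
    using profileD(1)[OF u] \<open>\<not> b \<le> a\<close> by (simp_all add: \<alpha>_def)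
  have "k t = 0" if t: "t \<in> {\<alpha>..<b}" for t
  proof -
    have "continuous_on {\<alpha>..b} v"
      using profileD(2)[OF v] by (rule continuous_on_subset) (use \<open>0 < a\<close> \<open>a < \<alpha>\<close> in auto)
    moreover have "continuous_on {\<alpha>..b} k"
      using k(1) by (rule continuous_on_subset) simp
    ultimately have "continuous_on {\<alpha>..b} (\<lambda>t. (0 - v t) * k t)"
      by (intro continuous_intros)
    moreover have u0: "u s = 0" if "s \<in> {\<alpha>..b}" for s
      using profileD(5)[OF u] that \<open>a < \<alpha>\<close> by simp
    ultimately have "continuous_on {\<alpha>..b} (\<lambda>t. (u t - v t) * k t)"
      by (elim continuous_on_eq) (simp add: u0)
    with t have "(u t - v t) * k t = 0"
      by (intro nonneg_has_integral_0_imp_eq_0[OF int0 nonneg _ \<open>\<alpha> < b\<close>]) auto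
    moreover have "u t = 0" "0 < v t"
      using profileD(5)[OF u] profileD(4)[OF v] t \<open>a < \<alpha>\<close> \<open>0 < a\<close> by simp_all
    ultimately show ?thesis
      by simp
  qed
  then have "k \<alpha> = 0" "k ((\<alpha> + b) / 2) = 0"
    using \<open>\<alpha> < b\<close> by auto
  then have "\<alpha> = c" "(\<alpha> + b) / 2 = c"
    using k(2) by blast+
  with \<open>\<alpha> < b\<close> show False
    by simp
qed

lemma profile_eq_if_weighted_integral_0:
  assumes u: "profile a u" and v: "profile b v"
    and k: "continuous_on UNIV k" "\<And>t. k t = 0 \<Longrightarrow> t = c"
    and nonneg: "\<And>t. 0 \<le> (u t - v t) * k t"
    and int0: "((\<lambda>t. (u t - v t) * k t) has_integral 0) UNIV"
  shows "u = v"
proof -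
  have swap: "(v t - u t) * - k t = (u t - v t) * k t" for t
    by (simp add: algebra_simps)
  have "a \<le> b"
  proof (rule profile_support_le_if_weighted_integral_0[OF v u])
    show "continuous_on UNIV (\<lambda>t. - k t)"
      using k(1) by (rule continuous_on_minus)
    show "t = c" if "- k t = 0" for t
    proof (rule k(2))
      show "k t = 0"
        using that by simp
    qed
    show "0 \<le> (v t - u t) * - k t" for t
      unfolding swap by (rule nonneg)
    show "((\<lambda>t. (v t - u t) * - k t) has_integral 0) UNIV"
      unfolding swap by (rule int0)
  qed
  moreover have "b \<le> a"
    by (rule profile_support_le_if_weighted_integral_0[OF u v k nonneg int0])
  ultimately have "b = a"
    by simp
  have "continuous_on {0..a} v"
    using profileD(2)[OF v] \<open>b = a\<close> by simp
  with profileD(2)[OF u] have cont: "continuous_on {0..a} (\<lambda>t. u t - v t)"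
    by (rule continuous_on_diff)
  have off: "u s = v s" if s: "s \<in> {0..a}" "s \<noteq> c" for s
  proof -
    have "continuous_on {0..a} k"
      using k(1) by (rule continuous_on_subset) simp
    with cont have "continuous_on {0..a} (\<lambda>t. (u t - v t) * k t)"
      by (rule continuous_on_mult)
    then have "(u s - v s) * k s = 0"
      using nonneg_has_integral_0_imp_eq_0[OF int0 nonneg _ profileD(1)[OF u] s(1)] by blast
    moreover have "k s \<noteq> 0"
      using k(2) s(2) by blast
    ultimately show "u s = v s"
      by simp
  qed
  have inside: "u t - v t = 0" if "t \<in> {0..a}" for t
  proof (rule continuous_on_vanishing_off_point[OF cont profileD(1)[OF u] _ that])
    show "u s - v s = 0" if "s \<in> {0..a}" "s \<noteq> c" for s
      using off[OF that] by simp
  qed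
  show ?thesis
  proof
    fix t
    show "u t = v t"
    proof (cases "t \<in> {0..a}")
      case False
      then have "t < 0 \<or> a < t"
        by auto
      then show ?thesis
        using profileD(5)[OF u, of t] profileD(5)[OF v, of t] \<open>b = a\<close> by simp
    qed (use inside in simp)
  qed
qed

lemma profile_power_eq_imp_eq:
  assumes u: "profile a u" and v: "profile b v" and "0 < p"
    and eq: "(\<lambda>t. u t ^ p) = (\<lambda>t. v t ^ p)"
  shows "u = v"
proof
  fix t
  have "u t ^ p = v t ^ p"
    using eq by (rule fun_cong)
  then show "u t = v t"
    using profileD(3)[OF u] profileD(3)[OF v] \<open>0 < p\<close> by (meson power_eq_imp_eq_base)
qed

section \<open>Densities crossing once\<close>

lemma has_integral_weighted_difference:
  fixes u v :: "real \<Rightarrow> real"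
  assumes "(u has_integral U) S" "(v has_integral V) S"
    and "((\<lambda>t. t * u t) has_integral I) S" "((\<lambda>t. t * v t) has_integral I) S" "c \<noteq> 0"
  shows "((\<lambda>t. (u t - v t) * (1 - t / c)) has_integral (U - V)) S"
proof -
  have "((\<lambda>t. t * u t - t * v t) has_integral I - I) S"
    using assms(3,4) by (rule has_integral_diff)
  then have "((\<lambda>t. (t * u t - t * v t) / c) has_integral (I - I) / c) S"
    by (rule has_integral_divide)
  with has_integral_diff[OF assms(1,2)]
  have "((\<lambda>t. (u t - v t) - (t * u t - t * v t) / c) has_integral (U - V) - (I - I) / c) S"
    by (rule has_integral_diff)
  moreover have "(u t - v t) - (t * u t - t * v t) / c = (u t - v t) * (1 - t / c)" for t
    using \<open>c \<noteq> 0\<close> by (simp add: field_simps)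
  ultimately show ?thesis
    by simp
qed

lemma single_crossing_weight_nonneg:
  fixes u v :: "real \<Rightarrow> real"
  assumes "0 < c" "\<And>t. t < c \<Longrightarrow> v t \<le> u t" "\<And>t. c < t \<Longrightarrow> u t \<le> v t"
  shows "0 \<le> (u t - v t) * (1 - t / c)"
proof (cases t c rule: linorder_cases)
  case less
  with assms show ?thesis
    by (intro mult_nonneg_nonneg) (auto simp: field_simps)
next
  case greater
  with assms show ?thesis
    by (intro mult_nonpos_nonpos) (auto simp: field_simps)
qed (use assms in simp)

text \<open>The weight \<open>1 - t/c\<close> changes sign where \<open>u - v\<close> does, and the first moments cancel.\<close>
lemma single_crossing_integral_le:
  fixes u v :: "real \<Rightarrow> real"
  assumes "(u has_integral U) UNIV" "(v has_integral V) UNIV"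
    and "((\<lambda>t. t * u t) has_integral I) UNIV" "((\<lambda>t. t * v t) has_integral I) UNIV"
    and "0 < c" "\<And>t. t < c \<Longrightarrow> v t \<le> u t" "\<And>t. c < t \<Longrightarrow> u t \<le> v t"
  shows "V \<le> U"
proof -
  have "0 \<le> U - V"
  proof (rule has_integral_nonneg)
    show "((\<lambda>t. (u t - v t) * (1 - t / c)) has_integral U - V) UNIV"
      using assms(1-4) \<open>0 < c\<close> by (intro has_integral_weighted_difference) simp_all
    show "0 \<le> (u t - v t) * (1 - t / c)" for t
      using assms(5-7) by (rule single_crossing_weight_nonneg)
  qed
  then show ?thesis
    by simp
qed

lemma profile_eq_if_single_crossing_integral_eq:
  assumes u: "profile a u" and v: "profile b v"
    and "(u has_integral U) UNIV" "(v has_integral U) UNIV"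
    and "((\<lambda>t. t * u t) has_integral I) UNIV" "((\<lambda>t. t * v t) has_integral I) UNIV"
    and "0 < c" "\<And>t. t < c \<Longrightarrow> v t \<le> u t" "\<And>t. c < t \<Longrightarrow> u t \<le> v t"
  shows "u = v"
proof (rule profile_eq_if_weighted_integral_0[OF u v, of "\<lambda>t. 1 - t / c" c])
  show "continuous_on UNIV (\<lambda>t. 1 - t / c)"
    using \<open>0 < c\<close> by (intro continuous_intros) simp
  show "t = c" if "1 - t / c = 0" for t
    using that \<open>0 < c\<close> by (simp add: field_simps)
  show "0 \<le> (u t - v t) * (1 - t / c)" for t
    using assms(7-9) by (rule single_crossing_weight_nonneg)
  show "((\<lambda>t. (u t - v t) * (1 - t / c)) has_integral 0) UNIV"
    using has_integral_weighted_difference[OF assms(3-6)] \<open>0 < c\<close> by simp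
qed

lemma profile_eq_if_le_first_moment_eq:
  assumes u: "profile a u" and v: "profile b v" and le: "\<And>t. u t \<le> v t"
    and "((\<lambda>t. t * u t) has_integral I) UNIV" "((\<lambda>t. t * v t) has_integral I) UNIV"
  shows "u = v"
proof -
  have "v = u"
  proof (rule profile_eq_if_weighted_integral_0[OF v u, of "\<lambda>t. t" 0])
    show "continuous_on UNIV (\<lambda>t. t)"
      by (rule continuous_on_id)
    show "0 \<le> (v t - u t) * t" for t
    proof (cases "0 \<le> t")
      case False
      then show ?thesis
        using profileD(5)[OF u, of t] profileD(5)[OF v, of t] by simp
    qed (use le[of t] in simp)
    have "((\<lambda>t. t * v t - t * u t) has_integral I - I) UNIV"
      using assms(5,4) by (rule has_integral_diff)
    then show "((\<lambda>t. (v t - u t) * t) has_integral 0) UNIV"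
      by (simp add: algebra_simps)
  qed simp
  then show ?thesis
    by simp
qed

lemma single_crossing_cases:
  fixes g l :: "real \<Rightarrow> real"
  assumes cross: "\<And>s t. s \<le> t \<Longrightarrow> g s < l s \<Longrightarrow> g t \<le> l t"
    and left: "\<And>t. t \<le> 0 \<Longrightarrow> g t \<le> l t" and right: "\<And>t. L < t \<Longrightarrow> g t \<le> l t"
  obtains "\<And>t. g t \<le> l t"
    | c where "0 < c" "\<And>t. t < c \<Longrightarrow> l t \<le> g t" "\<And>t. c < t \<Longrightarrow> g t \<le> l t"
proof (cases "\<forall>t. g t \<le> l t")
  case True
  then show ?thesis
    using that(1) by blast
next
  case False
  define S where "S = {t. l t < g t}"
  have "S \<noteq> {}"
    using False by (auto simp: S_def not_le)
  have bdd: "bdd_above S"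
  proof (rule bdd_aboveI)
    show "t \<le> L" if "t \<in> S" for t
      using right[of t] that by (force simp: S_def)
  qed
  obtain s where s: "s \<in> S"
    using \<open>S \<noteq> {}\<close> by blast
  have "0 < s"
  proof (rule ccontr)
    assume "\<not> 0 < s"
    with left[of s] s show False
      by (simp add: S_def)
  qed
  also have "s \<le> Sup S"
    using s bdd by (rule cSup_upper)
  finally have "0 < Sup S" .
  moreover have "l t \<le> g t" if "t < Sup S" for t
  proof (rule ccontr)
    assume "\<not> l t \<le> g t"
    obtain s where "s \<in> S" "t < s"
      using \<open>t < Sup S\<close> less_cSup_iff[OF \<open>S \<noteq> {}\<close> bdd] by blast
    with cross[of t s] \<open>\<not> l t \<le> g t\<close> show False
      by (simp add: S_def)
  qed
  moreover have "g t \<le> l t" if "Sup S < t" for t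
  proof (rule ccontr)
    assume "\<not> g t \<le> l t"
    then have "t \<le> Sup S"
      using bdd by (intro cSup_upper) (simp add: S_def)
    with that show False
      by simp
  qed
  ultimately show ?thesis
    by (rule that(2))
qed

lemma has_integral_UNIV_if_zero_outside:
  fixes f :: "real \<Rightarrow> real"
  assumes "continuous_on {a..b} f" "\<And>t. t \<notin> {a..b} \<Longrightarrow> f t = 0"
  shows "(f has_integral integral {a..b} f) UNIV"
proof (rule has_integral_on_superset)
  show "(f has_integral integral {a..b} f) {a..b}"
    using integrable_continuous_real[OF assms(1)] by (rule integrable_integral)
qed (use assms(2) in auto)

lemma H_classE:
  assumes "h \<in> H_class M m n" "2 \<le> n"
  obtains b where "supp_pos h = {0..b}" "profile b h" "concave_on {0..b} h" "h 0 = 1"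
    "\<And>t. t \<in> {0..b} \<Longrightarrow> h t \<le> 1 + m * t"
    "((\<lambda>t. t * h t ^ (n - 1)) has_integral M) UNIV"
    "((\<lambda>t. h t ^ (n - 1)) has_integral mu n h) UNIV"
proof -
  obtain b d where nonneg: "\<And>t. 0 \<le> h t" and "0 < b" and supp: "supp_pos h = {0..b}"
    and cont: "continuous_on {0..b} h" and conc: "concave_on {0..b} h" and "h 0 = 1"
    and der: "(h has_real_derivative d) (at 0 within {0..b})" and "d \<le> m"
    and moment: "integral {0..b} (\<lambda>t. t * h t ^ (n - 1)) = M"
    using assms(1) unfolding H_class_def by blast
  have outside: "h t = 0" if "t \<notin> {0..b}" for t
    using closure_subset[of "{t. 0 < h t}"] nonneg[of t] that supp
    unfolding supp_pos_def by force
  have "0 < h t" if t: "0 \<le> t" "t < b" for t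
  proof -
    have "1 + (h b - 1) / b * t \<le> h t"
      using concave_on_chord_from_left_end[OF conc, of t b] t \<open>h 0 = 1\<close> by simp
    moreover have "1 + (h b - 1) / b * t = (1 - t / b) + h b * t / b"
      using \<open>0 < b\<close> by (simp add: field_simps)
    moreover have "0 < 1 - t / b" "0 \<le> h b * t / b"
      using nonneg[of b] t \<open>0 < b\<close> by simp_all
    ultimately show ?thesis
      by linarith
  qed
  with \<open>0 < b\<close> cont nonneg outside have "profile b h"
    by (simp add: profile_def)
  moreover have "h t \<le> 1 + m * t" if "t \<in> {0..b}" for t
    using concave_on_le_tangent_at_left_end[OF conc \<open>0 < b\<close> der that] \<open>h 0 = 1\<close>
      mult_right_mono[OF \<open>d \<le> m\<close>, of t] that by simp
  moreover have "((\<lambda>t. t * h t ^ (n - 1)) has_integral M) UNIV"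
  proof -
    have "continuous_on {0..b} (\<lambda>t. t * h t ^ (n - 1))"
      using cont by (intro continuous_intros)
    with outside \<open>2 \<le> n\<close> show ?thesis
      using has_integral_UNIV_if_zero_outside[of 0 b "\<lambda>t. t * h t ^ (n - 1)"] moment by simp
  qed
  moreover have "((\<lambda>t. h t ^ (n - 1)) has_integral mu n h) UNIV"
  proof -
    have "continuous_on {0..b} (\<lambda>t. h t ^ (n - 1))"
      using cont by (intro continuous_intros)
    with outside \<open>2 \<le> n\<close> show ?thesis
      using has_integral_UNIV_if_zero_outside[of 0 b "\<lambda>t. h t ^ (n - 1)"] by (simp add: mu_def supp)
  qed
  ultimately show ?thesis
    using that supp conc \<open>h 0 = 1\<close> by blast
qed

section \<open>Truncated lines and tents\<close>

definition truncated_line :: "real \<Rightarrow> real \<Rightarrow> real \<Rightarrow> real" where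
  "truncated_line c B t = (if t \<in> {0..B} then 1 + c * t else 0)"

lemma profile_truncated_line:
  assumes "0 < B" "0 \<le> 1 + c * B"
  shows "profile B (truncated_line c B)"
proof -
  have pos: "0 < 1 + c * t" if "0 \<le> t" "t < B" for t
  proof -
    have "1 + c * t = (1 - t / B) + t / B * (1 + c * B)"
      using \<open>0 < B\<close> by (simp add: field_simps)
    moreover have "0 < 1 - t / B" "0 \<le> t / B * (1 + c * B)"
      using that assms by simp_all
    ultimately show ?thesis
      by linarith
  qed
  have "continuous_on {0..B} (truncated_line c B)"
  proof (rule continuous_on_eq)
    show "continuous_on {0..B} (\<lambda>t. 1 + c * t)"
      by (intro continuous_intros)
  qed (simp add: truncated_line_def)
  moreover have "0 \<le> truncated_line c B t" for t
    using pos[of t] assms by (cases "t = B") (auto simp: truncated_line_def)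
  ultimately show ?thesis
    using \<open>0 < B\<close> pos by (simp add: profile_def truncated_line_def)
qed

lemma concave_on_truncated_line: "concave_on {0..B} (truncated_line c B)"
  unfolding concave_on_iff
proof (intro conjI ballI allI impI)
  fix x y u v :: real
  assume xy: "x \<in> {0..B}" "y \<in> {0..B}" and uv: "0 \<le> u" "0 \<le> v" "u + v = 1"
  have "u * x + v * y \<le> u * B + v * B"
    using xy uv by (intro add_mono mult_left_mono) auto
  then have "u * x + v * y \<in> {0..B}"
    using xy uv by (simp flip: distrib_right)
  then have "truncated_line c B (u *\<^sub>R x + v *\<^sub>R y) = u * (1 + c * x) + v * (1 + c * y)"
    using uv by (simp add: truncated_line_def algebra_simps)
  then show "u * truncated_line c B x + v * truncated_line c B y \<le> truncated_line c B (u *\<^sub>R x + v *\<^sub>R y)"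
    using xy by (simp add: truncated_line_def)
qed simp

lemma truncated_line_in_H_class:
  assumes "0 < B" "0 \<le> 1 + c * B" "c \<le> m"
    and moment: "((\<lambda>t. t * (1 + c * t) ^ (n - 1)) has_integral M) {0..B}"
  shows "truncated_line c B \<in> H_class M m n"
proof -
  have "(truncated_line c B has_real_derivative c) (at 0 within {0..B})"
    by (rule has_field_derivative_transform_within[of "\<lambda>t. 1 + c * t" c 0 "{0..B}" 1])
      (use \<open>0 < B\<close> in \<open>auto intro!: derivative_eq_intros simp: truncated_line_def\<close>)
  moreover have "integral {0..B} (\<lambda>t. t * truncated_line c B t ^ (n - 1)) = M"
  proof -
    have "integral {0..B} (\<lambda>t. t * truncated_line c B t ^ (n - 1))
        = integral {0..B} (\<lambda>t. t * (1 + c * t) ^ (n - 1))"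
      by (rule integral_cong) (simp add: truncated_line_def)
    with moment show ?thesis
      by (simp add: integral_unique)
  qed
  moreover note profile = profile_truncated_line[OF assms(1,2)]
  ultimately show ?thesis
    unfolding H_class_def using assms(1,3) profileD(2,3)[OF profile] supp_pos_profile[OF profile]
      concave_on_truncated_line by (auto simp: truncated_line_def)
qed

lemma H_class_eq_truncated_line:
  assumes "h \<in> H_class M m n" "2 \<le> n" "supp_pos h = {0..b}" "\<And>t. t \<in> {0..b} \<Longrightarrow> h t = 1 + c * t"
  shows "h = truncated_line c b"
proof
  fix t
  obtain b' where "supp_pos h = {0..b'}" "profile b' h"
    using H_classE[OF assms(1,2)] by metis
  then have "profile b h"
    using assms(3) profileD(1) by fastforce
  show "h t = truncated_line c b t"
  proof (cases "t \<in> {0..b}")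
    case False
    then have "t < 0 \<or> b < t"
      by auto
    then have "h t = 0"
      by (rule profileD(5)[OF \<open>profile b h\<close>])
    moreover have "truncated_line c b t = 0"
      unfolding truncated_line_def using False by (simp only: if_False)
    ultimately show ?thesis
      by simp
  qed (simp add: assms(4) truncated_line_def)
qed

lemma has_integral_tent_moment:
  fixes B :: real and n :: nat
  assumes "0 < B" "0 < n"
  shows "((\<lambda>t. t * (1 - t / B) ^ (n - 1)) has_integral B\<^sup>2 / (real n * (real n + 1))) {0..B}"
proof -
  obtain p where n: "n = Suc p"
    using \<open>0 < n\<close> gr0_implies_Suc by blast
  define P where "P k t = (1 - t / B) ^ Suc k / real (Suc k)" for k t
  have P': "(P k has_real_derivative - ((1 - t / B) ^ k) / B) (at t)" for k t
  proof -
    have "((\<lambda>t. 1 - t / B) has_real_derivative - 1 / B) (at t)"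
      using \<open>0 < B\<close> by (auto intro!: derivative_eq_intros)
    then have "((\<lambda>t. (1 - t / B) ^ Suc k) has_real_derivative
        real (Suc k) * (- 1 / B * (1 - t / B) ^ (Suc k - Suc 0))) (at t)"
      by (rule DERIV_power)
    then have "(P k has_real_derivative
        real (Suc k) * (- 1 / B * (1 - t / B) ^ (Suc k - Suc 0)) / real (Suc k)) (at t)"
      unfolding P_def by (rule DERIV_cdivide)
    then show ?thesis
      by simp
  qed
  define F where "F t = B\<^sup>2 * (P (Suc p) t - P p t)" for t
  have "(F has_real_derivative t * (1 - t / B) ^ p) (at t)" for t
  proof -
    have "(F has_real_derivative B\<^sup>2 * (- ((1 - t / B) ^ Suc p) / B - - ((1 - t / B) ^ p) / B)) (at t)"
      unfolding F_def by (intro DERIV_cmult DERIV_diff P')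
    moreover have "B\<^sup>2 * (- (x * y) / B - - y / B) = B * (1 - x) * y" for x y
      using \<open>0 < B\<close> by (simp add: power2_eq_square field_simps)
    ultimately show ?thesis
      using \<open>0 < B\<close> by simp
  qed
  then have "((\<lambda>t. t * (1 - t / B) ^ p) has_integral F B - F 0) {0..B}"
    using \<open>0 < B\<close> by (intro fundamental_theorem_of_calculus)
      (auto simp: has_real_derivative_iff_has_vector_derivative[symmetric]
        intro: has_field_derivative_at_within)
  moreover have "F B - F 0 = B\<^sup>2 / (real n * (real n + 1))"
    using \<open>0 < B\<close> by (simp add: n F_def P_def field_simps)
  ultimately show ?thesis
    by (simp add: n)
qed

text \<open>The tent of width \<open>B\<close> has first moment \<open>B\<^sup>2 / (n (n + 1))\<close>, so \<open>tent_width M n\<close> is the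
  width of the only tent with first moment \<open>M\<close>.\<close>
definition tent_width :: "real \<Rightarrow> nat \<Rightarrow> real" where
  "tent_width M n = sqrt (M * real n * (real n + 1))"

lemma has_integral_truncated_tent_moment:
  assumes "0 < B" "2 \<le> n"
  shows "((\<lambda>t. t * truncated_line (- 1 / B) B t ^ (n - 1)) has_integral
    B\<^sup>2 / (real n * (real n + 1))) UNIV"
proof (rule has_integral_on_superset)
  show "((\<lambda>t. t * truncated_line (- 1 / B) B t ^ (n - 1)) has_integral
      B\<^sup>2 / (real n * (real n + 1))) {0..B}"
    using has_integral_tent_moment[OF \<open>0 < B\<close>, of n] \<open>2 \<le> n\<close>
    by (subst has_integral_cong[where g = "\<lambda>t. t * (1 - t / B) ^ (n - 1)"])
      (simp_all add: truncated_line_def)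
qed (use \<open>2 \<le> n\<close> in \<open>auto simp: truncated_line_def\<close>)

lemma tent_width_pos: "0 < M \<Longrightarrow> 0 < n \<Longrightarrow> 0 < tent_width M n"
  by (simp add: tent_width_def)

lemma tent_width_le:
  assumes "0 < M" "0 < n" "0 < B" "M \<le> B\<^sup>2 / (real n * (real n + 1))"
  shows "tent_width M n \<le> B"
proof (rule power2_le_imp_le)
  have "M * (real n * (real n + 1)) \<le> B\<^sup>2"
    using assms by (simp add: pos_le_divide_eq)
  then show "(tent_width M n)\<^sup>2 \<le> B\<^sup>2"
    using assms(1) by (simp add: tent_width_def mult.assoc)
qed (use \<open>0 < B\<close> in simp)

lemma has_integral_tent_width_moment:
  assumes "0 < M" "0 < n"
  shows "((\<lambda>t. t * (1 - t / tent_width M n) ^ (n - 1)) has_integral M) {0..tent_width M n}"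
proof -
  have "(tent_width M n)\<^sup>2 / (real n * (real n + 1)) = M"
    using assms by (simp add: tent_width_def)
  then show ?thesis
    using has_integral_tent_moment[OF tent_width_pos[OF assms] \<open>0 < n\<close>] by simp
qed

lemma tent_in_H_class:
  assumes "0 < M" "2 \<le> n" "- 1 / tent_width M n \<le> m"
  shows "truncated_line (- 1 / tent_width M n) (tent_width M n) \<in> H_class M m n"
proof (rule truncated_line_in_H_class)
  show "0 < tent_width M n"
    using assms(1,2) by (simp add: tent_width_pos)
  then show "0 \<le> 1 + - 1 / tent_width M n * tent_width M n"
    by simp
  show "((\<lambda>t. t * (1 + - 1 / tent_width M n * t) ^ (n - 1)) has_integral M) {0..tent_width M n}"
    using has_integral_tent_width_moment[OF assms(1)] assms(2) by simp
qed (rule assms(3))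

lemma H_class_le_truncated_line:
  assumes "h \<in> H_class M m n" "2 \<le> n" "m < 0"
  shows "h t \<le> truncated_line m (- 1 / m) t"
proof -
  obtain b where h: "profile b h" and up: "\<And>t. t \<in> {0..b} \<Longrightarrow> h t \<le> 1 + m * t"
    using H_classE[OF assms(1,2)] by metis
  show ?thesis
  proof (cases "t \<in> {0..b}")
    case True
    have "0 \<le> 1 + m * t"
      using up[OF True] profileD(3)[OF h, of t] by linarith
    then have "t \<le> - 1 / m"
      using \<open>m < 0\<close> by (simp add: field_simps)
    with True up[OF True] show ?thesis
      by (simp add: truncated_line_def)
  next
    case False
    then have "h t = 0"
      using profileD(5)[OF h, of t] by auto
    moreover have "profile (- 1 / m) (truncated_line m (- 1 / m))"
      using \<open>m < 0\<close> by (intro profile_truncated_line) simp_all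
    ultimately show ?thesis
      using profileD(3) by simp
  qed
qed

lemma H_class_slope_ge:
  assumes "h \<in> H_class M m n" "0 < M" "2 \<le> n"
  shows "- 1 / tent_width M n \<le> m"
proof (cases "0 \<le> m")
  case True
  have "0 < tent_width M n"
    using assms(2,3) by (simp add: tent_width_pos)
  with True show ?thesis
    by (smt (verit) divide_neg_pos)
next
  case False
  define B where "B = - 1 / m"
  have "0 < B" and slope: "- 1 / B = m"
    using False by (simp_all add: B_def)
  obtain b where h: "profile b h" and moment: "((\<lambda>t. t * h t ^ (n - 1)) has_integral M) UNIV"
    using H_classE[OF assms(1,3)] by metis
  have below: "t * h t ^ (n - 1) \<le> t * truncated_line (- 1 / B) B t ^ (n - 1)" for t
  proof (cases "0 \<le> t")
    case True
    have "h t \<le> truncated_line (- 1 / B) B t"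
      using H_class_le_truncated_line[OF assms(1,3)] False unfolding slope B_def by simp
    with True show ?thesis
      using profileD(3)[OF h, of t] by (simp add: mult_left_mono power_mono)
  next
    case False
    then show ?thesis
      using profileD(5)[OF h, of t] \<open>2 \<le> n\<close> by (simp add: truncated_line_def power_0_left)
  qed
  have "M \<le> B\<^sup>2 / (real n * (real n + 1))"
    using moment has_integral_truncated_tent_moment[OF \<open>0 < B\<close> \<open>2 \<le> n\<close>] below
    by (rule has_integral_le)
  then have "tent_width M n \<le> B"
    using assms(2,3) \<open>0 < B\<close> by (intro tent_width_le) simp_all
  then have "1 / B \<le> 1 / tent_width M n"
    by (rule divide_left_mono) (use \<open>0 < B\<close> tent_width_pos[OF assms(2), of n] assms(3) in simp_all)
  then show ?thesis
    unfolding slope[symmetric] by simp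
qed

lemma line_in_H_class_exists:
  assumes "0 < M" "2 \<le> n" "- 1 / tent_width M n \<le> m"
  obtains B where "0 < B" "0 \<le> 1 + m * B" "truncated_line m B \<in> H_class M m n"
proof -
  define W where "W = tent_width M n"
  define f where "f = (\<lambda>t. t * (1 + m * t) ^ (n - 1))"
  have "0 < W"
    using assms(1,2) by (simp add: W_def tent_width_pos)
  have above_tent: "1 - t / W \<le> 1 + m * t" if "0 \<le> t" for t
    using mult_right_mono[OF assms(3) that] by (simp add: W_def)
  have integrable: "f integrable_on {0..x}" for x
    unfolding f_def by (intro integrable_continuous_real continuous_intros)
  have "M \<le> integral {0..W} f"
  proof (rule has_integral_le)
    show "((\<lambda>t. t * (1 - t / W) ^ (n - 1)) has_integral M) {0..W}"
      unfolding W_def using assms(1,2) by (intro has_integral_tent_width_moment) simp_all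
    show "(f has_integral integral {0..W} f) {0..W}"
      using integrable by (rule integrable_integral)
    show "t * (1 - t / W) ^ (n - 1) \<le> f t" if "t \<in> {0..W}" for t
      unfolding f_def using that above_tent[of t] \<open>0 < W\<close>
      by (intro mult_left_mono power_mono) auto
  qed
  moreover have "integral {0..0} f \<le> M"
    using assms(1) by simp
  moreover have "continuous_on {0..W} (\<lambda>x. integral {0..x} f)"
    by (rule indefinite_integral_continuous_1[OF integrable])
  ultimately obtain B where B: "0 \<le> B" "B \<le> W" "integral {0..B} f = M"
    using IVT'[of "\<lambda>x. integral {0..x} f" 0 M W] \<open>0 < W\<close> by auto
  have "0 < B"
    using B assms(1) by (cases "B = 0") auto
  have "0 \<le> 1 - B / W"
    using B(2) \<open>0 < W\<close> by simp
  also have "\<dots> \<le> 1 + m * B"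
    using above_tent B(1) by simp
  finally have "0 \<le> 1 + m * B" .
  moreover have "truncated_line m B \<in> H_class M m n"
  proof (rule truncated_line_in_H_class[OF \<open>0 < B\<close> \<open>0 \<le> 1 + m * B\<close> order_refl])
    show "((\<lambda>t. t * (1 + m * t) ^ (n - 1)) has_integral M) {0..B}"
      using integrable_integral[OF integrable[of B]] B(3) unfolding f_def by simp
  qed
  ultimately show ?thesis
    using that \<open>0 < B\<close> by blast
qed

section \<open>Extremal members\<close>

lemma H_class_mu_le_line:
  assumes "0 < B" "0 \<le> 1 + m * B" "truncated_line m B \<in> H_class M m n"
    and "g \<in> H_class M m n" "2 \<le> n"
  shows "mu n g \<le> mu n (truncated_line m B)"
    and "mu n g = mu n (truncated_line m B) \<Longrightarrow> g = truncated_line m B"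
proof -
  define H where "H = truncated_line m B"
  have "0 < n - 1"
    using assms(5) by simp
  have H: "profile B H"
    unfolding H_def using assms(1,2) by (rule profile_truncated_line)
  obtain bg where g: "profile bg g" and g_up: "\<And>t. t \<in> {0..bg} \<Longrightarrow> g t \<le> 1 + m * t"
    and g1: "((\<lambda>t. t * g t ^ (n - 1)) has_integral M) UNIV"
    and g0: "((\<lambda>t. g t ^ (n - 1)) has_integral mu n g) UNIV"
    using H_classE[OF assms(4,5)] by metis
  obtain H1: "((\<lambda>t. t * H t ^ (n - 1)) has_integral M) UNIV"
    and H0: "((\<lambda>t. H t ^ (n - 1)) has_integral mu n H) UNIV"
    using H_classE[OF assms(3,5)] unfolding H_def by metis
  have below: "g t ^ (n - 1) \<le> H t ^ (n - 1)" if "t < B" for t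
  proof -
    have "g t \<le> H t"
    proof (cases "t \<in> {0..bg}")
      case True
      with that show ?thesis
        using g_up[OF True] by (simp add: H_def truncated_line_def)
    next
      case False
      then have "g t = 0"
        using profileD(5)[OF g, of t] by auto
      then show ?thesis
        using profileD(3)[OF H] by simp
    qed
    then show ?thesis
      using profileD(3)[OF g] by (rule power_mono)
  qed
  have above: "H t ^ (n - 1) \<le> g t ^ (n - 1)" if "B < t" for t
    using that profileD(3)[OF g, of t] \<open>0 < n - 1\<close> by (simp add: H_def truncated_line_def)
  show "mu n g \<le> mu n (truncated_line m B)"
    using single_crossing_integral_le[OF H0 g0 H1 g1 \<open>0 < B\<close> below above] by (simp add: H_def)
  assume "mu n g = mu n (truncated_line m B)"
  then have "(\<lambda>t. H t ^ (n - 1)) = (\<lambda>t. g t ^ (n - 1))"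
    using profile_power[OF H \<open>0 < n - 1\<close>] profile_power[OF g \<open>0 < n - 1\<close>] H0 g0 H1 g1
      \<open>0 < B\<close> below above
    unfolding H_def by (intro profile_eq_if_single_crossing_integral_eq) simp_all
  then show "g = truncated_line m B"
    unfolding H_def[symmetric] using profile_power_eq_imp_eq[OF H g \<open>0 < n - 1\<close>] by simp
qed

lemma concave_profile_crosses_tent_once:
  assumes conc: "concave_on {0..b} g" and "g 0 = 1" and g: "profile b g" and "0 < B"
    and "s \<le> t" and below: "g s < truncated_line (- 1 / B) B s"
  shows "g t \<le> truncated_line (- 1 / B) B t"
proof -
  have T: "profile B (truncated_line (- 1 / B) B)"
    using \<open>0 < B\<close> by (intro profile_truncated_line) simp_all
  have "0 < s"
  proof (rule ccontr)
    assume "\<not> 0 < s"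
    then consider "s < 0" | "s = 0"
      by linarith
    then show False
    proof cases
      case 1
      then show False
        using below profileD(5)[OF g, of s] by (simp add: truncated_line_def)
    qed (use below \<open>g 0 = 1\<close> \<open>0 < B\<close> in \<open>simp add: truncated_line_def\<close>)
  qed
  have "s \<le> B"
  proof (rule ccontr)
    assume "\<not> s \<le> B"
    then show False
      using below profileD(3)[OF g, of s] by (simp add: truncated_line_def)
  qed
  show ?thesis
  proof (cases "t \<le> b")
    case False
    then show ?thesis
      using profileD(5)[OF g, of t] profileD(3)[OF T, of t] by simp
  next
    case True
    have "g s < g 0 + - 1 / B * (s - 0)"
      using below \<open>0 < s\<close> \<open>s \<le> B\<close> \<open>g 0 = 1\<close> by (simp add: truncated_line_def)
    then have "g t < g 0 + - 1 / B * (t - 0)"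
      by (rule concave_on_stays_below_line[OF conc \<open>0 < s\<close> \<open>s \<le> t\<close> True])
    then have "g t < 1 - t / B"
      using \<open>g 0 = 1\<close> by simp
    moreover have "1 - t / B \<le> truncated_line (- 1 / B) B t"
      using \<open>0 < s\<close> \<open>s \<le> t\<close> \<open>0 < B\<close> by (simp add: truncated_line_def)
    ultimately show ?thesis
      by simp
  qed
qed

lemma H_class_mu_ge_tent:
  assumes "0 < B" "truncated_line (- 1 / B) B \<in> H_class M m n" "g \<in> H_class M m n" "2 \<le> n"
  shows "mu n (truncated_line (- 1 / B) B) \<le> mu n g"
    and "mu n g = mu n (truncated_line (- 1 / B) B) \<Longrightarrow> g = truncated_line (- 1 / B) B"
proof -
  define T where "T = truncated_line (- 1 / B) B"
  have "0 < n - 1"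
    using assms(4) by simp
  have T: "profile B T"
    unfolding T_def using \<open>0 < B\<close> by (intro profile_truncated_line) simp_all
  obtain bg where g: "profile bg g" and conc: "concave_on {0..bg} g" and "g 0 = 1"
    and g1: "((\<lambda>t. t * g t ^ (n - 1)) has_integral M) UNIV"
    and g0: "((\<lambda>t. g t ^ (n - 1)) has_integral mu n g) UNIV"
    using H_classE[OF assms(3,4)] by metis
  obtain T1: "((\<lambda>t. t * T t ^ (n - 1)) has_integral M) UNIV"
    and T0: "((\<lambda>t. T t ^ (n - 1)) has_integral mu n T) UNIV"
    using H_classE[OF assms(2,4)] unfolding T_def by metis
  have "mu n T \<le> mu n g \<and> (mu n g = mu n T \<longrightarrow> g = T)"
  proof (rule single_crossing_cases[of g T bg])
    show "g t \<le> T t" if "s \<le> t" "g s < T s" for s t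
      using concave_profile_crosses_tent_once[OF conc \<open>g 0 = 1\<close> g \<open>0 < B\<close>] that
      unfolding T_def by blast
    show "g t \<le> T t" if "t \<le> 0" for t
      using that profileD(5)[OF g, of t] \<open>g 0 = 1\<close> \<open>0 < B\<close>
      by (cases "t = 0") (simp_all add: T_def truncated_line_def)
    show "g t \<le> T t" if "bg < t" for t
      using that profileD(5)[OF g, of t] profileD(3)[OF T, of t] by simp
  next
    assume "\<And>t. g t \<le> T t"
    then have "g t ^ (n - 1) \<le> T t ^ (n - 1)" for t
      using profileD(3)[OF g] by (rule power_mono)
    then have "(\<lambda>t. g t ^ (n - 1)) = (\<lambda>t. T t ^ (n - 1))"
      using profile_power[OF g \<open>0 < n - 1\<close>] profile_power[OF T \<open>0 < n - 1\<close>] g1 T1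
      by (intro profile_eq_if_le_first_moment_eq) simp_all
    then show ?thesis
      using profile_power_eq_imp_eq[OF g T \<open>0 < n - 1\<close>] by simp
  next
    fix c assume "0 < c" and before: "\<And>t. t < c \<Longrightarrow> T t \<le> g t"
      and after: "\<And>t. c < t \<Longrightarrow> g t \<le> T t"
    have before_pow: "T t ^ (n - 1) \<le> g t ^ (n - 1)" if "t < c" for t
      using before[OF that] profileD(3)[OF T] by (rule power_mono)
    have after_pow: "g t ^ (n - 1) \<le> T t ^ (n - 1)" if "c < t" for t
      using after[OF that] profileD(3)[OF g] by (rule power_mono)
    have "(\<lambda>t. g t ^ (n - 1)) = (\<lambda>t. T t ^ (n - 1))" if "mu n g = mu n T"
      using profile_power[OF g \<open>0 < n - 1\<close>] profile_power[OF T \<open>0 < n - 1\<close>] g0 T0 g1 T1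
        \<open>0 < c\<close> before_pow after_pow that
      by (intro profile_eq_if_single_crossing_integral_eq) simp_all
    then show ?thesis
      using single_crossing_integral_le[OF g0 T0 g1 T1 \<open>0 < c\<close> before_pow after_pow]
        profile_power_eq_imp_eq[OF g T \<open>0 < n - 1\<close>] by blast
  qed
  then show "mu n (truncated_line (- 1 / B) B) \<le> mu n g"
    and "mu n g = mu n (truncated_line (- 1 / B) B) \<Longrightarrow> g = truncated_line (- 1 / B) B"
    unfolding T_def by blast+
qed

lemma H_class_minimizer_iff:
  assumes "0 < M" "2 \<le> n" "- 1 / tent_width M n \<le> m" "h \<in> H_class M m n"
  shows "(\<forall>g\<in>H_class M m n. mu n h \<le> mu n g) \<longleftrightarrow>
    (\<exists>b a c. supp_pos h = {0..b} \<and> (\<forall>t\<in>{0..b}. h t = a + c * t) \<and> h b = 0)"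
proof
  define W where "W = tent_width M n"
  have "0 < W"
    using assms(1,2) by (simp add: W_def tent_width_pos)
  have T: "truncated_line (- 1 / W) W \<in> H_class M m n"
    unfolding W_def using assms(1-3) by (rule tent_in_H_class)
  assume "\<forall>g\<in>H_class M m n. mu n h \<le> mu n g"
  then have "mu n h \<le> mu n (truncated_line (- 1 / W) W)"
    using T by blast
  moreover have "mu n (truncated_line (- 1 / W) W) \<le> mu n h"
    by (rule H_class_mu_ge_tent(1)[OF \<open>0 < W\<close> T assms(4,2)])
  ultimately have "mu n h = mu n (truncated_line (- 1 / W) W)"
    by simp
  then have "h = truncated_line (- 1 / W) W"
    by (rule H_class_mu_ge_tent(2)[OF \<open>0 < W\<close> T assms(4,2)])
  moreover have "supp_pos (truncated_line (- 1 / W) W) = {0..W}"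
    using \<open>0 < W\<close> by (intro supp_pos_profile profile_truncated_line) simp_all
  ultimately show "\<exists>b a c. supp_pos h = {0..b} \<and> (\<forall>t\<in>{0..b}. h t = a + c * t) \<and> h b = 0"
    using \<open>0 < W\<close> by (intro exI[of _ W] exI[of _ 1] exI[of _ "- 1 / W"]) (simp add: truncated_line_def)
next
  assume "\<exists>b a c. supp_pos h = {0..b} \<and> (\<forall>t\<in>{0..b}. h t = a + c * t) \<and> h b = 0"
  then obtain b a c where supp: "supp_pos h = {0..b}"
    and affine: "\<And>t. t \<in> {0..b} \<Longrightarrow> h t = a + c * t" and "h b = 0"
    by blast
  obtain b' where "supp_pos h = {0..b'}" "profile b' h" "h 0 = 1"
    using H_classE[OF assms(4,2)] by metis
  then have "{0..b} = {0..b'}" "0 < b'"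
    using supp profileD(1) by simp_all
  then have "0 < b"
    by auto
  have "a = 1"
    using affine[of 0] \<open>h 0 = 1\<close> \<open>0 < b\<close> by simp
  with affine[of b] \<open>h b = 0\<close> \<open>0 < b\<close> have "c = - 1 / b"
    by (simp add: field_simps)
  with affine \<open>a = 1\<close> have h: "h = truncated_line (- 1 / b) b"
    using H_class_eq_truncated_line[OF assms(4,2) supp] by simp
  show "\<forall>g\<in>H_class M m n. mu n h \<le> mu n g"
  proof
    fix g assume "g \<in> H_class M m n"
    with assms(2,4) show "mu n h \<le> mu n g"
      unfolding h by (intro H_class_mu_ge_tent(1)[OF \<open>0 < b\<close>])
  qed
qed

lemma H_class_maximizer_iff:
  assumes "0 < M" "2 \<le> n" "- 1 / tent_width M n \<le> m" "h \<in> H_class M m n"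
  shows "(\<forall>g\<in>H_class M m n. mu n g \<le> mu n h) \<longleftrightarrow> (\<forall>t\<in>supp_pos h. h t = 1 + m * t)"
proof
  obtain B where "0 < B" "0 \<le> 1 + m * B" and G: "truncated_line m B \<in> H_class M m n"
    using line_in_H_class_exists[OF assms(1-3)] .
  assume "\<forall>g\<in>H_class M m n. mu n g \<le> mu n h"
  then have "mu n (truncated_line m B) \<le> mu n h"
    using G by blast
  moreover have "mu n h \<le> mu n (truncated_line m B)"
    by (rule H_class_mu_le_line(1)[OF \<open>0 < B\<close> \<open>0 \<le> 1 + m * B\<close> G assms(4,2)])
  ultimately have "mu n h = mu n (truncated_line m B)"
    by simp
  then have "h = truncated_line m B"
    by (rule H_class_mu_le_line(2)[OF \<open>0 < B\<close> \<open>0 \<le> 1 + m * B\<close> G assms(4,2)])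
  moreover have "supp_pos (truncated_line m B) = {0..B}"
    using \<open>0 < B\<close> \<open>0 \<le> 1 + m * B\<close> by (intro supp_pos_profile profile_truncated_line)
  ultimately show "\<forall>t\<in>supp_pos h. h t = 1 + m * t"
    by (simp add: truncated_line_def)
next
  assume line: "\<forall>t\<in>supp_pos h. h t = 1 + m * t"
  obtain b where supp: "supp_pos h = {0..b}" and "profile b h"
    using H_classE[OF assms(4,2)] by metis
  have "0 < b"
    using \<open>profile b h\<close> by (rule profileD(1))
  have "h b = 1 + m * b"
    using line supp \<open>0 < b\<close> by simp
  then have "0 \<le> 1 + m * b"
    using profileD(3)[OF \<open>profile b h\<close>, of b] by simp
  have h: "h = truncated_line m b"
    using line supp by (intro H_class_eq_truncated_line[OF assms(4,2) supp]) simp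
  show "\<forall>g\<in>H_class M m n. mu n g \<le> mu n h"
  proof
    fix g assume "g \<in> H_class M m n"
    with assms(2,4) show "mu n g \<le> mu n h"
      unfolding h by (intro H_class_mu_le_line(1)[OF \<open>0 < b\<close> \<open>0 \<le> 1 + m * b\<close>])
  qed
qed

theorem lemma5:
  fixes M m :: real and n :: nat
  assumes "M > 0" and "n \<ge> 2"
  shows "(H_class M m n \<noteq> {} \<longleftrightarrow> m \<ge> - 1 / sqrt (M * real n * (real n + 1)))
    \<and> (m \<ge> - 1 / sqrt (M * real n * (real n + 1)) \<longrightarrow>
        (\<exists>h\<in>H_class M m n. \<forall>g\<in>H_class M m n. mu n h \<le> mu n g)
      \<and> (\<forall>h\<in>H_class M m n. (\<forall>g\<in>H_class M m n. mu n h \<le> mu n g) \<longleftrightarrow>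
           (\<exists>b a c. supp_pos h = {0..b} \<and> (\<forall>t\<in>{0..b}. h t = a + c * t) \<and> h b = 0))
      \<and> (\<exists>h\<in>H_class M m n. \<forall>g\<in>H_class M m n. mu n g \<le> mu n h)
      \<and> (\<forall>h\<in>H_class M m n. (\<forall>g\<in>H_class M m n. mu n g \<le> mu n h) \<longleftrightarrow>
           (\<forall>t\<in>supp_pos h. h t = 1 + m * t)))"
  unfolding tent_width_def[symmetric]
proof (intro conjI impI)
  show "H_class M m n \<noteq> {} \<longleftrightarrow> - 1 / tent_width M n \<le> m"
    using tent_in_H_class H_class_slope_ge assms by blast
  assume m: "- 1 / tent_width M n \<le> m"
  have T: "truncated_line (- 1 / tent_width M n) (tent_width M n) \<in> H_class M m n"
    using assms m by (rule tent_in_H_class)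
  then show "\<exists>h\<in>H_class M m n. \<forall>g\<in>H_class M m n. mu n h \<le> mu n g"
    using H_class_mu_ge_tent(1)[OF tent_width_pos T _ assms(2)] assms by auto
  obtain B where "0 < B" "0 \<le> 1 + m * B" and G: "truncated_line m B \<in> H_class M m n"
    using line_in_H_class_exists[OF assms m] .
  then show "\<exists>h\<in>H_class M m n. \<forall>g\<in>H_class M m n. mu n g \<le> mu n h"
    using H_class_mu_le_line(1)[OF \<open>0 < B\<close> \<open>0 \<le> 1 + m * B\<close> G _ assms(2)] by blast
  show "\<forall>h\<in>H_class M m n. (\<forall>g\<in>H_class M m n. mu n h \<le> mu n g) \<longleftrightarrow>
      (\<exists>b a c. supp_pos h = {0..b} \<and> (\<forall>t\<in>{0..b}. h t = a + c * t) \<and> h b = 0)"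
    using H_class_minimizer_iff[OF assms m] by blast
  show "\<forall>h\<in>H_class M m n. (\<forall>g\<in>H_class M m n. mu n g \<le> mu n h) \<longleftrightarrow>
      (\<forall>t\<in>supp_pos h. h t = 1 + m * t)"
    using H_class_maximizer_iff[OF assms m] by blast
qed

end
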